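(* Let $n>2k-t$, $k>t+1$, $q\geq 3$ and $k<2t+2$. Then \[\left[{n-t-2\atop k-t-2}\right]_q\left(1+\theta_{t+2}q^{k-t-1}\frac{q^{n-k}-1}{q^{k-t-1}-1}\right)>\theta_{k+1}-\theta_{k-t}+\left[{n-t\atop k-t}\right]_q-q^{(k-t+1)(k-t)}\left[{n-k-1\atop k-t}\right]_q,\] i.e. in $\mathrm{PG}(n,q)$ the set of all $k$-spaces meeting a fixed $(t+2)$-space in at least a $(t+1)$-space is larger than the set consisting of all $k$-spaces in $\langle\pi,\delta\rangle$ together with all $k$-spaces through $\delta$ meeting $\langle\pi,\delta\rangle$ in at least a $(t+1)$-space (for a $t$-space $\delta$ and $k$-space $\pi$ with $\dim(\pi\cap\delta)=t-1$).
   Context: $\left[{n\atop k}\right]_q=\frac{(q^n-1)\cdots(q^{n-k+1}-1)}{(q^k-1)\cdots(q-1)}$ for $k>0$, $=1$ for $k=0$; $\theta_m=\frac{q^{m+1}-1}{q-1}$; $q$ is a prime power; dimensions are projective. *)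

theory Defs
  imports Complex_Main "HOL-Computational_Algebra.Primes"
begin

text \<open>Gaussian binomial coefficient [n choose k]_q, as the product
  prod_{i<k} (q^(n-i) - 1) / (q^(i+1) - 1); equals 1 for k = 0
  (and 0 for k > n, since the factor i = n is q^0 - 1 = 0).\<close>
definition gauss_binom :: "real \<Rightarrow> nat \<Rightarrow> nat \<Rightarrow> real" where
  "gauss_binom q n k = (\<Prod>i<k. (q ^ (n - i) - 1) / (q ^ (i + 1) - 1))"

text \<open>theta_m = (q^(m+1) - 1)/(q - 1), number of points of PG(m,q).\<close>
definition theta :: "real \<Rightarrow> nat \<Rightarrow> real" where
  "theta q m = (q ^ (m + 1) - 1) / (q - 1)"

end

theory Submission
  imports Defs
begin

text \<open>Write \<open>s = k - t\<close>. Unrolling the q-Pascal rule \<open>s + 1\<close> times bounds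
  \<open>[n-t, s] - q^(s(s+1)) [n-k-1, s]\<close> by \<open>\<theta>_s [n-t-1, s-1]\<close>, and
  \<open>[n-t-1, s-1] = [n-t-2, s-2] (q^(n-t-1) - 1) / (q^(s-1) - 1)\<close>. After clearing the
  denominator \<open>q^(s-1) - 1\<close>, the leading term \<open>\<theta>_(t+2) q^(s-1) (q^(n-k) - 1) [n-t-2, s-2]\<close>
  is at least three times the same expression with \<open>\<theta>_(t+1)\<close>: two thirds absorb the bound
  above (as \<open>\<theta>_s \<le> \<theta>_(t+1)\<close> and \<open>q^(n-t-1) - 1 \<le> 2 q^(s-1) (q^(n-k) - 1)\<close>), one third
  absorbs \<open>\<theta>_(k+1) \<le> \<theta>_(t+1) (q^(n-k) - 1)\<close>.\<close>

lemma gauss_binom_Suc: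
  "gauss_binom Q N (Suc K) = gauss_binom Q N K * (Q ^ (N - K) - 1) / (Q ^ Suc K - 1)"
  unfolding gauss_binom_def by simp

lemma gauss_binom_Suc_Suc:
  "gauss_binom Q (Suc N) (Suc K) = gauss_binom Q N K * (Q ^ Suc N - 1) / (Q ^ Suc K - 1)"
proof -
  have "(\<Prod>i<Suc K. Q ^ (Suc N - i) - 1) = (Q ^ Suc N - 1) * (\<Prod>i<K. Q ^ (N - i) - 1)"
    by (subst prod.lessThan_Suc_shift) simp
  moreover have "(\<Prod>i<Suc K. Q ^ (i + 1) - 1) = (\<Prod>i<K. Q ^ (i + 1) - 1) * (Q ^ Suc K - 1)"
    by simp
  ultimately show ?thesis
    unfolding gauss_binom_def by (simp add: prod_dividef)
qed

lemma gauss_binom_0 [simp]: "gauss_binom Q N 0 = 1"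
  by (simp add: gauss_binom_def)

lemma gauss_binom_eq_0: "N < K \<Longrightarrow> gauss_binom Q N K = 0"
  unfolding gauss_binom_def by (intro prod_zero bexI[of _ N]) auto

lemma gauss_binom_pascal:
  assumes "1 < Q"
  shows "gauss_binom Q (Suc N) (Suc K) = gauss_binom Q N K + Q ^ Suc K * gauss_binom Q N (Suc K)"
proof (cases "K \<le> N")
  case True
  have "Q ^ Suc K - 1 \<noteq> 0"
    using one_less_power[OF assms, of "Suc K"] by simp
  moreover have "Q ^ N = Q ^ K * Q ^ (N - K)"
    using True by (simp flip: power_add)
  ultimately show ?thesis
    unfolding gauss_binom_Suc_Suc gauss_binom_Suc[of Q N K] by (simp add: field_simps)
next
  case False
  then show ?thesis
    unfolding gauss_binom_Suc_Suc gauss_binom_Suc[of Q N K] by (simp add: gauss_binom_eq_0)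
qed

lemma gauss_binom_nonneg:
  assumes "1 < Q"
  shows "0 \<le> gauss_binom Q N K"
  unfolding gauss_binom_def
proof (intro prod_nonneg ballI divide_nonneg_pos)
  fix i
  show "0 \<le> Q ^ (N - i) - 1" "0 < Q ^ (i + 1) - 1"
    using assms one_le_power[of Q "N - i"] one_less_power[of Q "i + 1"] by auto
qed

lemma gauss_binom_ge_1: "1 < Q \<Longrightarrow> K \<le> N \<Longrightarrow> 1 \<le> gauss_binom Q N K"
proof (induction K arbitrary: N)
  case 0
  then show ?case by simp
next
  case (Suc K)
  then obtain N' where N: "N = Suc N'" and "K \<le> N'"
    by (cases N) auto
  then have "1 \<le> gauss_binom Q N' K"
    using Suc by blast
  moreover have "0 \<le> Q ^ Suc K * gauss_binom Q N' (Suc K)"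
    using Suc.prems by (simp add: gauss_binom_nonneg)
  ultimately show ?case
    unfolding N gauss_binom_pascal[OF Suc.prems(1)] by linarith
qed

lemma gauss_binom_Suc_ge: "1 < Q \<Longrightarrow> Q ^ K * gauss_binom Q M K \<le> gauss_binom Q (Suc M) K"
  by (cases K) (simp_all add: gauss_binom_pascal gauss_binom_nonneg)

lemma gauss_binom_add_ge: "1 < Q \<Longrightarrow> Q ^ (j * K) * gauss_binom Q M K \<le> gauss_binom Q (M + j) K"
proof (induction j)
  case 0
  then show ?case by simp
next
  case (Suc j)
  have "Q ^ (Suc j * K) * gauss_binom Q M K = Q ^ K * (Q ^ (j * K) * gauss_binom Q M K)"
    by (simp add: power_add)
  also have "\<dots> \<le> Q ^ K * gauss_binom Q (M + j) K"
    using Suc by (intro mult_left_mono) auto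
  also have "\<dots> \<le> gauss_binom Q (M + Suc j) K"
    using gauss_binom_Suc_ge[OF Suc.prems] by simp
  finally show ?case .
qed

lemma gauss_binom_pascal_iterate_le:
  assumes "1 < Q"
  shows "gauss_binom Q (M + w) (Suc r) - Q ^ (w * Suc r) * gauss_binom Q M (Suc r)
         \<le> (\<Sum>j<w. Q ^ j) * gauss_binom Q (M + w - 1) r"
proof (induction w arbitrary: M)
  case 0
  then show ?case by simp
next
  case (Suc w)
  have "gauss_binom Q (Suc M + w) (Suc r) - Q ^ (w * Suc r) * gauss_binom Q (Suc M) (Suc r)
      \<le> (\<Sum>j<w. Q ^ j) * gauss_binom Q (M + w) r"
    using Suc.IH[of "Suc M"] by simp
  moreover have "Q ^ (w * Suc r) * gauss_binom Q M r \<le> Q ^ w * gauss_binom Q (M + w) r"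
  proof -
    have "Q ^ (w * Suc r) * gauss_binom Q M r = Q ^ w * (Q ^ (w * r) * gauss_binom Q M r)"
      by (simp add: power_add)
    also have "\<dots> \<le> Q ^ w * gauss_binom Q (M + w) r"
      using gauss_binom_add_ge[OF assms] assms by (intro mult_left_mono) auto
    finally show ?thesis .
  qed
  moreover have "gauss_binom Q (M + Suc w) (Suc r) - Q ^ (Suc w * Suc r) * gauss_binom Q M (Suc r)
      = (gauss_binom Q (Suc M + w) (Suc r) - Q ^ (w * Suc r) * gauss_binom Q (Suc M) (Suc r))
        + Q ^ (w * Suc r) * gauss_binom Q M r"
    using gauss_binom_pascal[OF assms, of M r] by (simp add: algebra_simps power_add)
  ultimately show ?case
    by (simp add: algebra_simps)
qed

lemma theta_eq_sum: "Q \<noteq> 1 \<Longrightarrow> theta Q m = (\<Sum>j<Suc m. Q ^ j)"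
  unfolding theta_def by (simp add: sum_gp_strict field_simps)

lemma theta_nonneg: "1 < Q \<Longrightarrow> 0 \<le> theta Q m"
  by (simp add: theta_eq_sum sum_nonneg)

lemma theta_mono:
  assumes "1 < Q" "a \<le> b"
  shows "theta Q a \<le> theta Q b"
proof -
  have "(\<Sum>j<Suc a. Q ^ j) \<le> (\<Sum>j<Suc b. Q ^ j)"
    using assms by (intro sum_mono2) auto
  then show ?thesis
    using assms by (simp add: theta_eq_sum del: sum.lessThan_Suc)
qed

lemma theta_Suc: "Q \<noteq> 1 \<Longrightarrow> theta Q (Suc m) = Q * theta Q m + 1"
  unfolding theta_def by (simp add: field_simps)

lemma theta_add: "theta Q (m + Suc j) = Q ^ Suc j * theta Q m + theta Q j"
proof -
  have "Q ^ (m + Suc j + 1) - 1 = Q ^ Suc j * (Q ^ (m + 1) - 1) + (Q ^ (j + 1) - 1)"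
    by (simp add: algebra_simps power_add)
  then show ?thesis
    unfolding theta_def by (simp only: add_divide_distrib times_divide_eq_right)
qed

lemma theta_Suc_ge: "3 \<le> Q \<Longrightarrow> 3 * theta Q m \<le> theta Q (Suc m)"
  using theta_Suc[of Q m] theta_nonneg[of Q m] mult_right_mono[of 3 Q "theta Q m"] by simp

lemma theta_add_le:
  assumes "2 \<le> Q" "j \<le> m" "j + 2 \<le> e"
  shows "theta Q (m + Suc j) \<le> theta Q m * (Q ^ e - 1)"
proof -
  have "theta Q (m + Suc j) \<le> Q ^ Suc j * theta Q m + theta Q m"
    using assms theta_mono[of Q j m] by (simp only: theta_add) simp
  also have "\<dots> = (Q ^ Suc j + 1) * theta Q m"
    by (simp add: algebra_simps)
  also have "\<dots> \<le> (Q ^ e - 1) * theta Q m"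
  proof (intro mult_right_mono)
    have "2 \<le> Q ^ Suc j"
      using assms(1) one_le_power[of Q j] mult_mono[of 2 Q 1 "Q ^ j"] by simp
    then have "2 * 1 \<le> Q ^ Suc j * (Q - 1)"
      using assms(1) by (intro mult_mono) auto
    moreover have "Q ^ Suc (Suc j) \<le> Q ^ e"
      using assms by (intro power_increasing) auto
    ultimately show "Q ^ Suc j + 1 \<le> Q ^ e - 1"
      by (simp add: algebra_simps)
  qed (use assms in \<open>simp add: theta_nonneg\<close>)
  finally show ?thesis
    by (simp add: mult.commute)
qed

lemma leading_term_dominates:
  fixes G P X D T1 T2 Ts Tk :: real
  assumes "1 \<le> G" "1 < P" "2 \<le> X"
    and "0 \<le> Ts" "Ts \<le> T1" "3 * T1 \<le> T2" "0 \<le> Tk" "Tk \<le> T1 * (X - 1)"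
    and "D \<le> Ts * (G * (X * P - 1) / (P - 1))"
  shows "Tk - Ts + D < G * (1 + T2 * P * ((X - 1) / (P - 1)))"
proof -
  define W where "W = P * (X - 1)"
  have "0 \<le> W"
    using assms unfolding W_def by simp
  have "(Tk - Ts + D) * (P - 1) \<le> Tk * P + Ts * G * (X * P - 1)"
  proof -
    have "D * (P - 1) \<le> Ts * G * (X * P - 1)"
      using assms(2,9) by (simp add: field_simps)
    moreover have "0 \<le> Ts * (P - 1)"
      using assms by simp
    ultimately show ?thesis
      using assms(7) by (simp add: algebra_simps)
  qed
  also have "\<dots> \<le> G * T1 * W + 2 * G * T1 * W"
  proof (rule add_mono)
    have "Tk * P \<le> T1 * (X - 1) * P"
      using assms by (intro mult_right_mono) auto
    also have "\<dots> = T1 * W"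
      unfolding W_def by (simp add: ac_simps)
    also have "\<dots> \<le> G * T1 * W"
      using assms \<open>0 \<le> W\<close> mult_right_mono[of 1 G "T1 * W"] by (simp add: mult.assoc)
    finally show "Tk * P \<le> G * T1 * W" .
    have "2 * P \<le> X * P" "2 * W = 2 * (X * P) - 2 * P"
      using assms unfolding W_def by (simp_all add: algebra_simps)
    then have "0 \<le> X * P - 1" "X * P - 1 \<le> 2 * W"
      using assms(2) by linarith+
    then have "(Ts * G) * (X * P - 1) \<le> (T1 * G) * (2 * W)"
      using assms by (intro mult_mono mult_right_mono) auto
    then show "Ts * G * (X * P - 1) \<le> 2 * G * T1 * W"
      by (simp add: ac_simps)
  qed
  also have "\<dots> \<le> G * T2 * W"
    using assms \<open>0 \<le> W\<close> mult_right_mono[of "3 * T1" T2 "G * W"] by simp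
  also have "\<dots> < G * (P - 1) + G * T2 * W"
    using assms by simp
  also have "\<dots> = G * (1 + T2 * P * ((X - 1) / (P - 1))) * (P - 1)"
    using assms(2) unfolding W_def by (simp add: field_simps)
  finally show ?thesis
    using assms(2) by simp
qed

theorem mainTheorem16:
  fixes n k t q :: nat
  assumes qpp: "\<exists>p m. prime p \<and> m > 0 \<and> q = p ^ m"
    and q3: "q \<ge> 3"
    and h1: "n + t > 2 * k"
    and h2: "k > t + 1"
    and h3: "k < 2 * t + 2"
  shows "gauss_binom (real q) (n - t - 2) (k - t - 2) *
           (1 + theta (real q) (t + 2) * real q ^ (k - t - 1) *
                ((real q ^ (n - k) - 1) / (real q ^ (k - t - 1) - 1)))
         > theta (real q) (k + 1) - theta (real q) (k - t)
           + gauss_binom (real q) (n - t) (k - t)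
           - real q ^ ((k - t + 1) * (k - t)) * gauss_binom (real q) (n - k - 1) (k - t)"
proof -
  let ?Q = "real q"
  define s where "s = k - t"
  let ?D = "gauss_binom ?Q (n - t) s - ?Q ^ ((s + 1) * s) * gauss_binom ?Q (n - k - 1) s"
  define G where "G = gauss_binom ?Q (n - t - 2) (s - 2)"
  define P where "P = ?Q ^ (s - 1)"
  define X where "X = ?Q ^ (n - k)"
  have Q: "3 \<le> ?Q"
    using q3 by simp
  have s: "2 \<le> s" "s \<le> t + 1" "s + 1 \<le> n - k" "s - 2 \<le> n - t - 2"
    using h1 h2 h3 unfolding s_def by auto
  have shifts: "n - k - 1 + (s + 1) = n - t" "Suc (s - 1) = s" "t + 1 + s = k + 1"
      "Suc (n - t - 2) = n - t - 1" "Suc (s - 2) = s - 1"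
    using s h2 unfolding s_def by auto
  have "?Q ^ (n - t - 1) = X * P" "(\<Sum>j<s + 1. ?Q ^ j) = theta ?Q s"
    using Q s h2 unfolding X_def P_def s_def by (simp_all add: theta_eq_sum flip: power_add)
  then have D: "?D \<le> theta ?Q s * (G * (X * P - 1) / (P - 1))"
    using gauss_binom_pascal_iterate_le[of ?Q "n - k - 1" "s + 1" "s - 1", unfolded shifts]
      gauss_binom_Suc_Suc[of ?Q "n - t - 2" "s - 2", unfolded shifts] Q
    unfolding G_def P_def by auto
  have "theta ?Q (k + 1) \<le> theta ?Q (t + 1) * (X - 1)"
    using theta_add_le[of ?Q "s - 1" "t + 1" "n - k", unfolded shifts] Q s unfolding X_def by simp
  moreover have "?Q ^ 1 \<le> X"
    using Q s unfolding X_def by (intro power_increasing) auto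
  moreover have "1 < P" "1 \<le> G"
    using Q s unfolding P_def G_def by (auto intro: one_less_power gauss_binom_ge_1)
  ultimately have "theta ?Q (k + 1) - theta ?Q s + ?D
      < G * (1 + theta ?Q (t + 2) * P * ((X - 1) / (P - 1)))"
    using Q s D theta_Suc_ge[of ?Q "t + 1"]
    by (intro leading_term_dominates) (auto simp: theta_nonneg theta_mono)
  then show ?thesis
    unfolding G_def P_def X_def s_def by simp
qed

end
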